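(* Let $\Diamond$ be a cellular decomposition of a surface into quadrilaterals, with complex cochains $C^k(\Diamond)$ and coboundary $d$, equipped with the products described in the context. Then $d$ is a derivation for these products: for all functions $f,g\in C^0(\Diamond)$ and every 1-form $\alpha\in C^1(\Diamond)$, $d(f\cdot g)=(df)\cdot g+f\cdot dg$ and $d(f\cdot\alpha)=df\wedge\alpha+f\cdot d\alpha$.
   Context: Products on $\Diamond$: for functions, $(f\cdot g)(x)=f(x)g(x)$; for a function and a 1-form, $\int_{(x,y)}f\cdot\alpha=\frac{f(x)+f(y)}{2}\int_{(x,y)}\alpha$ on each edge; for two 1-forms, on a positively oriented face $(x_1,x_2,x_3,x_4)$ (indices mod 4), $\iint\alpha\wedge\beta=\frac14\sum_{k=1}^4\Bigl(\int_{(x_{k-1},x_k)}\alpha\int_{(x_k,x_{k+1})}\beta-\int_{(x_{k+1},x_k)}\alpha\int_{(x_k,x_{k-1})}\beta\Bigr)$; for a function and a 2-form, $\iint_{(x_1,x_2,x_3,x_4)}f\cdot\omega=\frac{f(x_1)+f(x_2)+f(x_3)+f(x_4)}{4}\iint_{(x_1,x_2,x_3,x_4)}\omega$. The coboundary is given by Stokes: $\int_{(x,y)}df=f(y)-f(x)$, $\iint_F d\alpha=\oint_{\partial F}\alpha$. *)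

theory Defs
  imports Complex_Main
begin

text \<open>A quad decomposition: vertices of type 'v, oriented edges E (a symmetric,
irreflexive relation), faces F of type 'f, and for each face its four vertices
vx F k (k = 0..3, read modulo 4) listed in positive orientation.\<close>

definition quad_decomposition ::
  "('v \<times> 'v) set \<Rightarrow> 'f set \<Rightarrow> ('f \<Rightarrow> nat \<Rightarrow> 'v) \<Rightarrow> bool" where
  "quad_decomposition E F vx \<longleftrightarrow>
     (\<forall>x y. (x, y) \<in> E \<longrightarrow> (y, x) \<in> E \<and> x \<noteq> y) \<and>
     (\<forall>\<phi>\<in>F. inj_on (vx \<phi>) {0..<4} \<and>
        (\<forall>k<4. (vx \<phi> k, vx \<phi> ((k + 1) mod 4)) \<in> E))"

text \<open>Cochains: 0-forms 'v => complex; 1-forms are given by their integrals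
over oriented edges, 'v => 'v => complex, antisymmetric on E; 2-forms are
given by their integrals over faces, 'f => complex.\<close>

definition is_1form :: "('v \<times> 'v) set \<Rightarrow> ('v \<Rightarrow> 'v \<Rightarrow> complex) \<Rightarrow> bool" where
  "is_1form E \<alpha> \<longleftrightarrow> (\<forall>(x, y)\<in>E. \<alpha> y x = - \<alpha> x y)"

definition fv :: "('f \<Rightarrow> nat \<Rightarrow> 'v) \<Rightarrow> 'f \<Rightarrow> nat \<Rightarrow> 'v" where
  "fv vx \<phi> k = vx \<phi> (k mod 4)"

definition d0 :: "('v \<Rightarrow> complex) \<Rightarrow> 'v \<Rightarrow> 'v \<Rightarrow> complex" where
  "d0 f = (\<lambda>x y. f y - f x)"

text \<open>coboundary on 1-forms (Stokes): integral over the positively oriented boundary\<close>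
definition d1 :: "('f \<Rightarrow> nat \<Rightarrow> 'v) \<Rightarrow> ('v \<Rightarrow> 'v \<Rightarrow> complex) \<Rightarrow> 'f \<Rightarrow> complex" where
  "d1 vx \<alpha> = (\<lambda>\<phi>. \<Sum>k<4. \<alpha> (fv vx \<phi> k) (fv vx \<phi> (k + 1)))"

definition mult00 :: "('v \<Rightarrow> complex) \<Rightarrow> ('v \<Rightarrow> complex) \<Rightarrow> 'v \<Rightarrow> complex" where
  "mult00 f g = (\<lambda>x. f x * g x)"

text \<open>function times 1-form (also used for 1-form times function)\<close>
definition mult01 :: "('v \<Rightarrow> complex) \<Rightarrow> ('v \<Rightarrow> 'v \<Rightarrow> complex) \<Rightarrow> 'v \<Rightarrow> 'v \<Rightarrow> complex" where
  "mult01 f \<alpha> = (\<lambda>x y. (f x + f y) / 2 * \<alpha> x y)"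

definition wedge :: "('f \<Rightarrow> nat \<Rightarrow> 'v) \<Rightarrow> ('v \<Rightarrow> 'v \<Rightarrow> complex) \<Rightarrow> ('v \<Rightarrow> 'v \<Rightarrow> complex) \<Rightarrow> 'f \<Rightarrow> complex" where
  "wedge vx \<alpha> \<beta> = (\<lambda>\<phi>. (1/4) * (\<Sum>k<4.
       \<alpha> (fv vx \<phi> (k + 3)) (fv vx \<phi> k) * \<beta> (fv vx \<phi> k) (fv vx \<phi> (k + 1))
     - \<alpha> (fv vx \<phi> (k + 1)) (fv vx \<phi> k) * \<beta> (fv vx \<phi> k) (fv vx \<phi> (k + 3))))"

definition mult02 :: "('f \<Rightarrow> nat \<Rightarrow> 'v) \<Rightarrow> ('v \<Rightarrow> complex) \<Rightarrow> ('f \<Rightarrow> complex) \<Rightarrow> 'f \<Rightarrow> complex" where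
  "mult02 vx f \<omega> = (\<lambda>\<phi>. (\<Sum>k<4. f (fv vx \<phi> k)) / 4 * \<omega> \<phi>)"

end

theory Submission
  imports Defs
begin

text \<open>Both identities are polynomial identities in the values of f, g and \<alpha> on one
edge, resp. on the four vertices and the four boundary edges of one face. On a face,
the only input beyond algebra is the antisymmetry of \<alpha>: it turns the reversed
edges occurring in the wedge product into the oriented boundary edges of d\<alpha>.\<close>

lemma d0_mult00: "d0 (mult00 f g) x y = mult01 g (d0 f) x y + mult01 f (d0 g) x y"
  by (simp add: d0_def mult00_def mult01_def field_simps)

lemma quad_decomposition_boundary_edge:
  assumes "quad_decomposition E F vx" and "\<phi> \<in> F"
  shows "(fv vx \<phi> k, fv vx \<phi> (k + 1)) \<in> E"
proof -
  have "(vx \<phi> (k mod 4), vx \<phi> ((k mod 4 + 1) mod 4)) \<in> E"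
    using assms unfolding quad_decomposition_def by simp
  then show ?thesis
    by (simp add: fv_def mod_Suc_eq)
qed

lemma is_1form_boundary_antisym:
  assumes "quad_decomposition E F vx" and "is_1form E \<alpha>" and "\<phi> \<in> F"
  shows "\<alpha> (fv vx \<phi> (k + 1)) (fv vx \<phi> k) = - \<alpha> (fv vx \<phi> k) (fv vx \<phi> (k + 1))"
  using assms(2) quad_decomposition_boundary_edge[OF assms(1,3)]
  unfolding is_1form_def by blast

lemma sum_lessThan_4: "(\<Sum>k<(4::nat). h k) = h 0 + h 1 + h 2 + (h 3 :: 'a :: comm_monoid_add)"
  by (simp add: eval_nat_numeral)

lemma fv_reduce_mod_4:
  "fv vx \<phi> 0 = vx \<phi> 0" "fv vx \<phi> 1 = vx \<phi> 1" "fv vx \<phi> 2 = vx \<phi> 2" "fv vx \<phi> 3 = vx \<phi> 3"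
  "fv vx \<phi> 4 = vx \<phi> 0" "fv vx \<phi> 5 = vx \<phi> 1" "fv vx \<phi> 6 = vx \<phi> 2"
  by (simp_all add: fv_def)

lemma d1_mult01:
  assumes boundary_antisym:
    "\<And>k. \<alpha> (fv vx \<phi> (k + 1)) (fv vx \<phi> k) = - \<alpha> (fv vx \<phi> k) (fv vx \<phi> (k + 1))"
  shows "d1 vx (mult01 f \<alpha>) \<phi> = wedge vx (d0 f) \<alpha> \<phi> + mult02 vx f (d1 vx \<alpha>) \<phi>"
proof -
  \<comment> \<open>stated as rewrite rules so that no simplifier call mixes numerals with Suc\<close>
  have index_sums: "(0::nat) + 1 = 1" "(1::nat) + 1 = 2" "(2::nat) + 1 = 3" "(3::nat) + 1 = 4"
    "(0::nat) + 3 = 3" "(1::nat) + 3 = 4" "(2::nat) + 3 = 5" "(3::nat) + 3 = 6"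
    by simp_all
  have "\<alpha> (vx \<phi> 1) (vx \<phi> 0) = - \<alpha> (vx \<phi> 0) (vx \<phi> 1)"
    "\<alpha> (vx \<phi> 2) (vx \<phi> 1) = - \<alpha> (vx \<phi> 1) (vx \<phi> 2)"
    "\<alpha> (vx \<phi> 3) (vx \<phi> 2) = - \<alpha> (vx \<phi> 2) (vx \<phi> 3)"
    "\<alpha> (vx \<phi> 0) (vx \<phi> 3) = - \<alpha> (vx \<phi> 3) (vx \<phi> 0)"
    using boundary_antisym[of 0] boundary_antisym[of 1] boundary_antisym[of 2] boundary_antisym[of 3]
    unfolding index_sums fv_reduce_mod_4 .
  then show ?thesis
    unfolding d1_def wedge_def mult02_def mult01_def d0_def sum_lessThan_4 index_sums fv_reduce_mod_4
    by (simp add: field_simps)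
qed

theorem mainTheorem15:
  fixes E :: "('v \<times> 'v) set" and F :: "'f set" and vx :: "'f \<Rightarrow> nat \<Rightarrow> 'v"
    and f g :: "'v \<Rightarrow> complex" and \<alpha> :: "'v \<Rightarrow> 'v \<Rightarrow> complex"
  assumes "quad_decomposition E F vx"
    and "is_1form E \<alpha>"
  shows "(\<forall>(x, y)\<in>E. d0 (mult00 f g) x y = mult01 g (d0 f) x y + mult01 f (d0 g) x y)
       \<and> (\<forall>\<phi>\<in>F. d1 vx (mult01 f \<alpha>) \<phi> = wedge vx (d0 f) \<alpha> \<phi> + mult02 vx f (d1 vx \<alpha>) \<phi>)"
proof (intro conjI ballI)
  fix \<phi> assume "\<phi> \<in> F"
  then show "d1 vx (mult01 f \<alpha>) \<phi> = wedge vx (d0 f) \<alpha> \<phi> + mult02 vx f (d1 vx \<alpha>) \<phi>"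
    by (intro d1_mult01 is_1form_boundary_antisym[OF assms])
qed (auto simp: d0_mult00)

end
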